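(* Let $(X_i)_{i\in I}$ be a family of zero-dimensional coherent domains and $F\subseteq\prod_{i\in I}\mathcal V_{\le1}(X_i)\subseteq\prod_{i\in I}\mathcal V(X_i)$ a finite set. Then $\overline{\mathrm{conv}\,F}={\downarrow}\mathrm{conv}\,F$; in particular $b(F)={\downarrow}\mathrm{conv}\,F\cap{\uparrow}\mathrm{conv}\,F$.
   Context: A domain is a continuous dcpo; coherent means the intersection of two compact saturated subsets is compact; zero-dimensional means the Scott topology has a basis of clopens. $\mathcal V(X)$ is the set of continuous valuations on $X$ (strict, monotone, modular maps from Scott-opens to $[0,\infty]$ preserving directed unions), ordered pointwise, with pointwise addition and scaling; $\mathcal V_{\le1}(X)$ those with $\mu(X)\le1$. Products carry the componentwise order and operations. $\mathrm{conv}\,F$ is the set of finite convex combinations of elements of $F$, $\overline{A}$ the Scott closure, ${\downarrow}A$, ${\uparrow}A$ down- and up-closures, and $b(F)=\overline{\mathrm{conv}\,F}\cap{\uparrow}\mathrm{conv}\,F$. *)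

theory Defs
  imports "HOL-Analysis.Analysis" "HOL-Library.Extended_Nonnegative_Real"
begin

definition directed :: "'a set \<Rightarrow> ('a \<Rightarrow> 'a \<Rightarrow> bool) \<Rightarrow> 'a set \<Rightarrow> bool" where
  "directed D le S \<longleftrightarrow> S \<subseteq> D \<and> S \<noteq> {} \<and> (\<forall>x\<in>S. \<forall>y\<in>S. \<exists>z\<in>S. le x z \<and> le y z)"

definition is_lub :: "'a set \<Rightarrow> ('a \<Rightarrow> 'a \<Rightarrow> bool) \<Rightarrow> 'a set \<Rightarrow> 'a \<Rightarrow> bool" where
  "is_lub D le S s \<longleftrightarrow> s \<in> D \<and> (\<forall>x\<in>S. le x s) \<and> (\<forall>u\<in>D. (\<forall>x\<in>S. le x u) \<longrightarrow> le s u)"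

definition poset_on :: "'a set \<Rightarrow> ('a \<Rightarrow> 'a \<Rightarrow> bool) \<Rightarrow> bool" where
  "poset_on D le \<longleftrightarrow> (\<forall>x\<in>D. le x x) \<and> (\<forall>x\<in>D. \<forall>y\<in>D. le x y \<and> le y x \<longrightarrow> x = y)
     \<and> (\<forall>x\<in>D. \<forall>y\<in>D. \<forall>z\<in>D. le x y \<and> le y z \<longrightarrow> le x z)"

definition dcpo_on :: "'a set \<Rightarrow> ('a \<Rightarrow> 'a \<Rightarrow> bool) \<Rightarrow> bool" where
  "dcpo_on D le \<longleftrightarrow> poset_on D le \<and> (\<forall>S. directed D le S \<longrightarrow> (\<exists>s. is_lub D le S s))"

definition way_below :: "'a set \<Rightarrow> ('a \<Rightarrow> 'a \<Rightarrow> bool) \<Rightarrow> 'a \<Rightarrow> 'a \<Rightarrow> bool" where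
  "way_below D le x y \<longleftrightarrow> x \<in> D \<and> y \<in> D \<and>
     (\<forall>S s. directed D le S \<and> is_lub D le S s \<and> le y s \<longrightarrow> (\<exists>z\<in>S. le x z))"

definition domain_on :: "'a set \<Rightarrow> ('a \<Rightarrow> 'a \<Rightarrow> bool) \<Rightarrow> bool" where
  "domain_on D le \<longleftrightarrow> dcpo_on D le \<and>
     (\<forall>x\<in>D. directed D le {y\<in>D. way_below D le y x} \<and> is_lub D le {y\<in>D. way_below D le y x} x)"

definition scott_open :: "'a set \<Rightarrow> ('a \<Rightarrow> 'a \<Rightarrow> bool) \<Rightarrow> 'a set \<Rightarrow> bool" where
  "scott_open D le U \<longleftrightarrow> U \<subseteq> D \<and> (\<forall>x\<in>U. \<forall>y\<in>D. le x y \<longrightarrow> y \<in> U) \<and>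
     (\<forall>S s. directed D le S \<and> is_lub D le S s \<and> s \<in> U \<longrightarrow> S \<inter> U \<noteq> {})"

definition scott_closed :: "'a set \<Rightarrow> ('a \<Rightarrow> 'a \<Rightarrow> bool) \<Rightarrow> 'a set \<Rightarrow> bool" where
  "scott_closed D le C \<longleftrightarrow> scott_open D le (D - C) \<and> C \<subseteq> D"

definition scott_closure :: "'a set \<Rightarrow> ('a \<Rightarrow> 'a \<Rightarrow> bool) \<Rightarrow> 'a set \<Rightarrow> 'a set" where
  "scott_closure D le A = \<Inter>{C. scott_closed D le C \<and> A \<subseteq> C}"

definition scott_compact :: "'a set \<Rightarrow> ('a \<Rightarrow> 'a \<Rightarrow> bool) \<Rightarrow> 'a set \<Rightarrow> bool" where
  "scott_compact D le A \<longleftrightarrow> A \<subseteq> D \<and>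
     (\<forall>\<U>. (\<forall>U\<in>\<U>. scott_open D le U) \<and> A \<subseteq> \<Union>\<U> \<longrightarrow> (\<exists>\<V>\<subseteq>\<U>. finite \<V> \<and> A \<subseteq> \<Union>\<V>))"

definition scott_saturated :: "'a set \<Rightarrow> ('a \<Rightarrow> 'a \<Rightarrow> bool) \<Rightarrow> 'a set \<Rightarrow> bool" where
  "scott_saturated D le A \<longleftrightarrow> A \<subseteq> D \<and> A = D \<inter> \<Inter>{U. scott_open D le U \<and> A \<subseteq> U}"

definition coherent_on :: "'a set \<Rightarrow> ('a \<Rightarrow> 'a \<Rightarrow> bool) \<Rightarrow> bool" where
  "coherent_on D le \<longleftrightarrow> (\<forall>A B. scott_compact D le A \<and> scott_saturated D le A \<and>
      scott_compact D le B \<and> scott_saturated D le B \<longrightarrow> scott_compact D le (A \<inter> B))"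

definition zero_dim_on :: "'a set \<Rightarrow> ('a \<Rightarrow> 'a \<Rightarrow> bool) \<Rightarrow> bool" where
  "zero_dim_on D le \<longleftrightarrow> (\<forall>U x. scott_open D le U \<and> x \<in> U \<longrightarrow>
      (\<exists>V. scott_open D le V \<and> scott_open D le (D - V) \<and> x \<in> V \<and> V \<subseteq> U))"

text \<open>Continuous valuations, represented as functions on all sets that vanish
  off the Scott-open sets (canonical representative).\<close>
definition cont_val :: "'a set \<Rightarrow> ('a \<Rightarrow> 'a \<Rightarrow> bool) \<Rightarrow> ('a set \<Rightarrow> ennreal) \<Rightarrow> bool" where
  "cont_val D le \<mu> \<longleftrightarrow>
     (\<forall>U. \<not> scott_open D le U \<longrightarrow> \<mu> U = 0) \<and>
     \<mu> {} = 0 \<and>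
     (\<forall>U V. scott_open D le U \<and> scott_open D le V \<and> U \<subseteq> V \<longrightarrow> \<mu> U \<le> \<mu> V) \<and>
     (\<forall>U V. scott_open D le U \<and> scott_open D le V \<longrightarrow> \<mu> U + \<mu> V = \<mu> (U \<union> V) + \<mu> (U \<inter> V)) \<and>
     (\<forall>\<U>. \<U> \<noteq> {} \<and> (\<forall>U\<in>\<U>. scott_open D le U) \<and> (\<forall>U\<in>\<U>. \<forall>V\<in>\<U>. \<exists>W\<in>\<U>. U \<union> V \<subseteq> W)
        \<longrightarrow> \<mu> (\<Union>\<U>) = (SUP U\<in>\<U>. \<mu> U))"

definition prod_V :: "'i set \<Rightarrow> ('i \<Rightarrow> 'a set) \<Rightarrow> ('i \<Rightarrow> 'a \<Rightarrow> 'a \<Rightarrow> bool) \<Rightarrow> ('i \<Rightarrow> 'a set \<Rightarrow> ennreal) set" where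
  "prod_V I X le = {\<nu>. (\<forall>i\<in>I. cont_val (X i) (le i) (\<nu> i)) \<and> (\<forall>i. i \<notin> I \<longrightarrow> \<nu> i = (\<lambda>U. 0))}"

definition prod_V1 :: "'i set \<Rightarrow> ('i \<Rightarrow> 'a set) \<Rightarrow> ('i \<Rightarrow> 'a \<Rightarrow> 'a \<Rightarrow> bool) \<Rightarrow> ('i \<Rightarrow> 'a set \<Rightarrow> ennreal) set" where
  "prod_V1 I X le = {\<nu>\<in>prod_V I X le. \<forall>i\<in>I. \<nu> i (X i) \<le> 1}"

definition prod_le :: "'i set \<Rightarrow> ('i \<Rightarrow> 'a set) \<Rightarrow> ('i \<Rightarrow> 'a \<Rightarrow> 'a \<Rightarrow> bool)
    \<Rightarrow> ('i \<Rightarrow> 'a set \<Rightarrow> ennreal) \<Rightarrow> ('i \<Rightarrow> 'a set \<Rightarrow> ennreal) \<Rightarrow> bool" where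
  "prod_le I X le \<nu> \<nu>' \<longleftrightarrow> (\<forall>i\<in>I. \<forall>U. scott_open (X i) (le i) U \<longrightarrow> \<nu> i U \<le> \<nu>' i U)"

definition conv_hull :: "('i \<Rightarrow> 'a set \<Rightarrow> ennreal) set \<Rightarrow> ('i \<Rightarrow> 'a set \<Rightarrow> ennreal) set" where
  "conv_hull F = {\<nu>. \<exists>G c. finite G \<and> G \<subseteq> F \<and> (\<Sum>g\<in>G. c g) = 1 \<and>
      \<nu> = (\<lambda>i U. \<Sum>g\<in>G. c g * g i U)}"

definition down_set :: "'b set \<Rightarrow> ('b \<Rightarrow> 'b \<Rightarrow> bool) \<Rightarrow> 'b set \<Rightarrow> 'b set" where
  "down_set D le A = {x\<in>D. \<exists>a\<in>A. le x a}"

definition up_set :: "'b set \<Rightarrow> ('b \<Rightarrow> 'b \<Rightarrow> bool) \<Rightarrow> 'b set \<Rightarrow> 'b set" where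
  "up_set D le A = {x\<in>D. \<exists>a\<in>A. le a x}"

definition b_set :: "'i set \<Rightarrow> ('i \<Rightarrow> 'a set) \<Rightarrow> ('i \<Rightarrow> 'a \<Rightarrow> 'a \<Rightarrow> bool)
    \<Rightarrow> ('i \<Rightarrow> 'a set \<Rightarrow> ennreal) set \<Rightarrow> ('i \<Rightarrow> 'a set \<Rightarrow> ennreal) set" where
  "b_set I X le F = scott_closure (prod_V I X le) (prod_le I X le) (conv_hull F)
      \<inter> up_set (prod_V I X le) (prod_le I X le) (conv_hull F)"

end

theory Submission
  imports Defs
begin

text \<open>Because F is finite and every valuation in it has total mass at most 1, conv F is the
  image of the standard simplex on F under the map sending coefficients to the corresponding
  combination, and "the combination dominates x" is a closed condition on the coefficients.
  For a directed family S in \<open>\<down>conv F\<close> these closed subsets of the compact simplex, one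
  for each member of S, have the finite intersection property because S is directed; a common
  point gives a convex combination above every member of S, hence above its supremum. Thus
  \<open>\<down>conv F\<close> is Scott-closed, and so it is the Scott closure of conv F.\<close>

lemma directed_finite_upper_bound:
  assumes "directed D le S" "finite T" "T \<subseteq> S"
    and trans: "\<And>x y z. x \<in> D \<Longrightarrow> y \<in> D \<Longrightarrow> z \<in> D \<Longrightarrow> le x y \<Longrightarrow> le y z \<Longrightarrow> le x z"
  shows "\<exists>z\<in>S. \<forall>x\<in>T. le x z"
  using assms(2,3)
proof (induction T rule: finite_induct)
  case empty
  then show ?case using assms(1) by (auto simp: directed_def)
next
  case (insert a T)
  then obtain z where z: "z \<in> S" "\<forall>x\<in>T. le x z" by auto
  with insert.prems assms(1) obtain w where w: "w \<in> S" "le a w" "le z w"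
    unfolding directed_def by blast
  have "S \<subseteq> D" using assms(1) by (simp add: directed_def)
  with insert.prems z w have "\<forall>x\<in>T. le x w" by (blast intro: trans)
  with w show ?case by auto
qed

lemma scott_closed_down_closed:
  assumes "scott_closed D le C" "x \<in> D" "le x y" "y \<in> C"
  shows "x \<in> C"
  using assms unfolding scott_closed_def scott_open_def by blast

lemma scott_closed_down_set:
  assumes trans: "\<And>x y z. x \<in> D \<Longrightarrow> y \<in> D \<Longrightarrow> z \<in> D \<Longrightarrow> le x y \<Longrightarrow> le y z \<Longrightarrow> le x z"
    and "A \<subseteq> D"
    and lub: "\<And>S s. directed D le S \<Longrightarrow> is_lub D le S s \<Longrightarrow> S \<subseteq> down_set D le A
               \<Longrightarrow> s \<in> down_set D le A"
  shows "scott_closed D le (down_set D le A)"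
  unfolding scott_closed_def scott_open_def
proof (intro conjI allI impI ballI)
  fix x y assume "x \<in> D - down_set D le A" "y \<in> D" "le x y"
  with trans \<open>A \<subseteq> D\<close> show "y \<in> D - down_set D le A"
    unfolding down_set_def by blast
next
  fix S s assume "directed D le S \<and> is_lub D le S s \<and> s \<in> D - down_set D le A"
  moreover have "S \<subseteq> D" using calculation by (simp add: directed_def)
  ultimately show "S \<inter> (D - down_set D le A) \<noteq> {}" using lub by blast
qed (auto simp: down_set_def)

lemma scott_closure_eq_down_set:
  assumes trans: "\<And>x y z. x \<in> D \<Longrightarrow> y \<in> D \<Longrightarrow> z \<in> D \<Longrightarrow> le x y \<Longrightarrow> le y z \<Longrightarrow> le x z"
    and refl: "\<And>x. x \<in> A \<Longrightarrow> le x x"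
    and "A \<subseteq> D"
    and lub: "\<And>S s. directed D le S \<Longrightarrow> is_lub D le S s \<Longrightarrow> S \<subseteq> down_set D le A
               \<Longrightarrow> s \<in> down_set D le A"
  shows "scott_closure D le A = down_set D le A"
proof
  have "A \<subseteq> down_set D le A" using refl \<open>A \<subseteq> D\<close> by (auto simp: down_set_def)
  moreover have "scott_closed D le (down_set D le A)"
    by (rule scott_closed_down_set) (use assms in blast)+
  ultimately show "scott_closure D le A \<subseteq> down_set D le A"
    unfolding scott_closure_def by blast
  show "down_set D le A \<subseteq> scott_closure D le A"
    unfolding scott_closure_def down_set_def by (blast intro: scott_closed_down_closed)
qed

lemma cont_val_le_whole:
  assumes "cont_val D le \<mu>"
  shows "\<mu> U \<le> \<mu> D"
proof (cases "scott_open D le U")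
  case True
  moreover have "scott_open D le D" unfolding scott_open_def directed_def by auto
  ultimately show ?thesis using assms unfolding cont_val_def scott_open_def by blast
next
  case False
  with assms show ?thesis unfolding cont_val_def by simp
qed

lemma sum_SUP_directed_ennreal:
  fixes f :: "'g \<Rightarrow> 'u \<Rightarrow> ennreal"
  assumes "finite G" "\<U> \<noteq> {}"
    and directed: "\<And>U V. U \<in> \<U> \<Longrightarrow> V \<in> \<U> \<Longrightarrow> \<exists>W\<in>\<U>. r U W \<and> r V W"
    and mono: "\<And>g U V. g \<in> G \<Longrightarrow> U \<in> \<U> \<Longrightarrow> V \<in> \<U> \<Longrightarrow> r U V \<Longrightarrow> f g U \<le> f g V"
  shows "(\<Sum>g\<in>G. SUP U\<in>\<U>. f g U) = (SUP U\<in>\<U>. \<Sum>g\<in>G. f g U)"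
  using assms(1) mono
proof (induction G rule: finite_induct)
  case empty
  then show ?case using \<open>\<U> \<noteq> {}\<close> by simp
next
  case (insert a G)
  have "(\<Sum>g\<in>insert a G. SUP U\<in>\<U>. f g U) = (SUP U\<in>\<U>. f a U) + (SUP U\<in>\<U>. \<Sum>g\<in>G. f g U)"
    using insert by simp
  also have "\<dots> = (SUP U\<in>\<U>. f a U + (\<Sum>g\<in>G. f g U))"
  proof (rule SUP_add_directed_ennreal[symmetric])
    fix U V assume "U \<in> \<U>" "V \<in> \<U>"
    with directed obtain W where "W \<in> \<U>" "r U W" "r V W" by blast
    with insert.prems \<open>U \<in> \<U>\<close> \<open>V \<in> \<U>\<close>
    show "\<exists>W\<in>\<U>. f a U + (\<Sum>g\<in>G. f g V) \<le> f a W + (\<Sum>g\<in>G. f g W)"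
      by (intro bexI[of _ W] add_mono sum_mono) auto
  qed
  also have "\<dots> = (SUP U\<in>\<U>. \<Sum>g\<in>insert a G. f g U)" using insert by simp
  finally show ?case .
qed

lemma cont_val_sum_scaled:
  assumes "finite G" "\<And>g. g \<in> G \<Longrightarrow> cont_val D le (\<mu> g)"
  shows "cont_val D le (\<lambda>U. \<Sum>g\<in>G. c g * \<mu> g U)"
  unfolding cont_val_def
proof (intro conjI allI impI)
  fix U V assume "scott_open D le U \<and> scott_open D le V"
  then have "\<mu> g U + \<mu> g V = \<mu> g (U \<union> V) + \<mu> g (U \<inter> V)" if "g \<in> G" for g
    using assms(2)[OF that] unfolding cont_val_def by blast
  then show "(\<Sum>g\<in>G. c g * \<mu> g U) + (\<Sum>g\<in>G. c g * \<mu> g V) =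
      (\<Sum>g\<in>G. c g * \<mu> g (U \<union> V)) + (\<Sum>g\<in>G. c g * \<mu> g (U \<inter> V))"
    by (simp add: sum.distrib[symmetric] distrib_left[symmetric])
next
  fix \<U>
  assume \<U>: "\<U> \<noteq> {} \<and> (\<forall>U\<in>\<U>. scott_open D le U) \<and> (\<forall>U\<in>\<U>. \<forall>V\<in>\<U>. \<exists>W\<in>\<U>. U \<union> V \<subseteq> W)"
  have "(\<Sum>g\<in>G. c g * \<mu> g (\<Union>\<U>)) = (\<Sum>g\<in>G. SUP U\<in>\<U>. c g * \<mu> g U)"
    using \<U> assms(2) unfolding cont_val_def by (intro sum.cong) (auto simp: SUP_mult_left_ennreal)
  also have "\<dots> = (SUP U\<in>\<U>. \<Sum>g\<in>G. c g * \<mu> g U)"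
    using \<U> assms unfolding cont_val_def
    by (intro sum_SUP_directed_ennreal[where r = "(\<subseteq>)"] mult_left_mono) auto
  finally show "(\<Sum>g\<in>G. c g * \<mu> g (\<Union>\<U>)) = (SUP U\<in>\<U>. \<Sum>g\<in>G. c g * \<mu> g U)" .
qed (use assms in \<open>auto simp: cont_val_def intro!: sum_mono mult_left_mono\<close>)

lemma conv_hull_subset_prod_V:
  assumes "F \<subseteq> prod_V I X le"
  shows "conv_hull F \<subseteq> prod_V I X le"
proof
  fix \<nu> assume "\<nu> \<in> conv_hull F"
  then obtain G c where G: "finite G" "G \<subseteq> F" and \<nu>: "\<nu> = (\<lambda>i U. \<Sum>g\<in>G. c g * g i U)"
    unfolding conv_hull_def by blast
  show "\<nu> \<in> prod_V I X le"
    unfolding \<nu> using G assms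
    by (auto simp: prod_V_def subset_iff intro!: cont_val_sum_scaled)
qed

text \<open>Coefficients are extended by zero outside F, so that the simplex is compact in the
  product topology on all of \<open>'b \<Rightarrow> real\<close>.\<close>

definition std_simplex_on :: "'b set \<Rightarrow> ('b \<Rightarrow> real) set" where
  "std_simplex_on F = {c. (\<forall>g\<in>F. 0 \<le> c g) \<and> (\<forall>g. g \<notin> F \<longrightarrow> c g = 0) \<and> (\<Sum>g\<in>F. c g) = 1}"

definition real_comb :: "('i \<Rightarrow> 'a set \<Rightarrow> ennreal) set \<Rightarrow> (('i \<Rightarrow> 'a set \<Rightarrow> ennreal) \<Rightarrow> real)
    \<Rightarrow> 'i \<Rightarrow> 'a set \<Rightarrow> ennreal" where
  "real_comb F c = (\<lambda>i U. \<Sum>g\<in>F. ennreal (c g) * g i U)"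

lemma closed_std_simplex_on: "closed (std_simplex_on F)"
proof -
  have "std_simplex_on F = (\<Inter>g\<in>F. {c. 0 \<le> c g}) \<inter> (\<Inter>g\<in>-F. {c. c g = 0}) \<inter>
      {c. (\<Sum>g\<in>F. c g) = 1}"
    by (auto simp: std_simplex_on_def)
  then show ?thesis
    by (simp only:) (intro closed_Int closed_INT ballI closed_Collect_le closed_Collect_eq
        continuous_intros continuous_on_product_coordinates)
qed

lemma compact_std_simplex_on:
  assumes "finite F"
  shows "compact (std_simplex_on F)"
proof -
  define box where "box = (PiE UNIV (\<lambda>g. if g \<in> F then {0..1} else {0}) :: (_ \<Rightarrow> real) set)"
  have "compact box"
    using compactin_PiE[of "\<lambda>_. euclidean" UNIV "\<lambda>g. if g \<in> F then {0..1::real} else {0}"]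
    by (simp add: box_def euclidean_product_topology)
  moreover have "c g \<le> 1" if "c \<in> std_simplex_on F" "g \<in> F" for c g
    using that assms member_le_sum[of g F c] by (auto simp: std_simplex_on_def)
  then have "std_simplex_on F = std_simplex_on F \<inter> box"
    by (auto simp: std_simplex_on_def box_def PiE_iff)
  ultimately show ?thesis using closed_std_simplex_on by (metis closed_Int_compact)
qed

lemma real_comb_in_conv_hull:
  assumes "finite F" "c \<in> std_simplex_on F"
  shows "real_comb F c \<in> conv_hull F"
proof -
  have "(\<Sum>g\<in>F. ennreal (c g)) = 1"
    using assms by (simp add: std_simplex_on_def sum_ennreal)
  with assms(1) show ?thesis
    unfolding conv_hull_def real_comb_def by blast
qed

lemma conv_hull_real_comb:
  assumes "finite F" "a \<in> conv_hull F"
  obtains c where "c \<in> std_simplex_on F" "a = real_comb F c"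
proof -
  obtain G d where G: "finite G" "G \<subseteq> F" "(\<Sum>g\<in>G. d g) = 1"
    and a: "a = (\<lambda>i U. \<Sum>g\<in>G. d g * g i U)"
    using assms(2) unfolding conv_hull_def by blast
  have d_finite: "d g < top" if "g \<in> G" for g
    using member_le_sum[of g G d] G that by (auto simp: top.not_eq_extremum order.strict_trans1)
  define c where "c g = (if g \<in> G then enn2real (d g) else 0)" for g
  have c: "ennreal (c g) = (if g \<in> G then d g else 0)" for g
    using d_finite by (auto simp: c_def ennreal_enn2real)
  have "(\<Sum>g\<in>F. c g) = (\<Sum>g\<in>G. enn2real (d g))"
    unfolding c_def using G assms(1) by (simp add: sum.If_cases Int_absorb1)
  also have "\<dots> = enn2real (\<Sum>g\<in>G. d g)" using d_finite by (simp add: enn2real_sum)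
  also have "\<dots> = 1" using G by simp
  finally have "c \<in> std_simplex_on F" using G by (auto simp: std_simplex_on_def c_def)
  moreover have "real_comb F c i U = (\<Sum>g\<in>F. if g \<in> G then d g * g i U else 0)" for i U
    unfolding real_comb_def c by (intro sum.cong) auto
  then have "a = real_comb F c"
    using G assms(1) by (simp add: a fun_eq_iff sum.If_cases Int_absorb1)
  ultimately show thesis by (rule that)
qed

lemma real_comb_eq_ennreal_sum:
  assumes "F \<subseteq> prod_V1 I X le" "i \<in> I" "c \<in> std_simplex_on F"
  shows "real_comb F c i U = ennreal (\<Sum>g\<in>F. c g * enn2real (g i U))"
proof -
  have finite_value: "g i U < top" if "g \<in> F" for g
  proof -
    have "g i U \<le> g i (X i)"
      using assms that by (intro cont_val_le_whole) (auto simp: prod_V1_def prod_V_def)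
    also have "\<dots> \<le> 1" using assms that by (auto simp: prod_V1_def)
    finally show ?thesis using ennreal_one_less_top order.strict_trans1 by blast
  qed
  have "ennreal (\<Sum>g\<in>F. c g * enn2real (g i U)) = (\<Sum>g\<in>F. ennreal (c g * enn2real (g i U)))"
    using assms(3) by (intro sum_ennreal[symmetric]) (auto simp: std_simplex_on_def)
  also have "\<dots> = real_comb F c i U"
    using assms(3) finite_value unfolding real_comb_def
    by (intro sum.cong) (auto simp: std_simplex_on_def ennreal_mult ennreal_enn2real)
  finally show ?thesis ..
qed

lemma closed_dominating_coefficients:
  assumes "F \<subseteq> prod_V1 I X le"
  shows "closed {c \<in> std_simplex_on F. prod_le I X le x (real_comb F c)}"
proof -
  have dominating: "closed {c. x i U \<le> ennreal (\<Sum>g\<in>F. c g * r g)}" for i U and r :: "_ \<Rightarrow> real"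
    by (intro closed_Collect_le continuous_intros continuous_on_ennreal continuous_on_product_coordinates)
  have "{c \<in> std_simplex_on F. prod_le I X le x (real_comb F c)} = std_simplex_on F \<inter>
      (\<Inter>i\<in>I. \<Inter>U\<in>{U. scott_open (X i) (le i) U}.
         {c. x i U \<le> ennreal (\<Sum>g\<in>F. c g * enn2real (g i U))})"
    using real_comb_eq_ennreal_sum[OF assms] by (auto simp: prod_le_def)
  then show ?thesis
    by (simp only:) (intro closed_Int closed_std_simplex_on closed_INT ballI dominating)
qed

lemma prod_le_trans: "prod_le I X le x y \<Longrightarrow> prod_le I X le y z \<Longrightarrow> prod_le I X le x z"
  unfolding prod_le_def by (meson order_trans)

lemma down_set_conv_hull_directed_lub:
  assumes F: "finite F" "F \<subseteq> prod_V1 I X le"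
    and S: "directed (prod_V I X le) (prod_le I X le) S" "is_lub (prod_V I X le) (prod_le I X le) S s"
    and below: "S \<subseteq> down_set (prod_V I X le) (prod_le I X le) (conv_hull F)"
  shows "s \<in> down_set (prod_V I X le) (prod_le I X le) (conv_hull F)"
proof -
  define K where "K x = {c \<in> std_simplex_on F. prod_le I X le x (real_comb F c)}" for x
  have witness: "\<exists>c. c \<in> K x" if x: "x \<in> S" for x
  proof -
    obtain a where "a \<in> conv_hull F" "prod_le I X le x a"
      using below x unfolding down_set_def by blast
    moreover obtain c where "c \<in> std_simplex_on F" "a = real_comb F c"
      using conv_hull_real_comb[OF F(1) \<open>a \<in> conv_hull F\<close>] by blast
    ultimately show ?thesis unfolding K_def by blast
  qed
  have "std_simplex_on F \<inter> (\<Inter>x\<in>S. K x) \<noteq> {}"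
  proof (rule compact_imp_fip_image[OF compact_std_simplex_on[OF F(1)]])
    show "closed (K x)" for x
      unfolding K_def by (rule closed_dominating_coefficients[OF F(2)])
  next
    fix T assume "finite T" "T \<subseteq> S"
    then obtain z where "z \<in> S" "\<forall>x\<in>T. prod_le I X le x z"
      using directed_finite_upper_bound[OF S(1)] prod_le_trans by metis
    moreover obtain c where "c \<in> K z" using witness \<open>z \<in> S\<close> by blast
    ultimately have "c \<in> std_simplex_on F \<inter> (\<Inter>x\<in>T. K x)"
      unfolding K_def by (auto intro: prod_le_trans)
    then show "std_simplex_on F \<inter> (\<Inter>x\<in>T. K x) \<noteq> {}" by blast
  qed
  then obtain c where c: "c \<in> std_simplex_on F" "\<forall>x\<in>S. prod_le I X le x (real_comb F c)"
    unfolding K_def by blast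
  have "F \<subseteq> prod_V I X le" using F(2) by (auto simp: prod_V1_def)
  with F(1) c(1) have "real_comb F c \<in> conv_hull F" "real_comb F c \<in> prod_V I X le"
    using real_comb_in_conv_hull conv_hull_subset_prod_V by blast+
  with S(2) c(2) show ?thesis
    unfolding is_lub_def down_set_def by blast
qed

theorem mainTheorem16:
  fixes I :: "'i set" and X :: "'i \<Rightarrow> 'a set" and le :: "'i \<Rightarrow> 'a \<Rightarrow> 'a \<Rightarrow> bool"
    and F :: "('i \<Rightarrow> 'a set \<Rightarrow> ennreal) set"
  assumes "\<forall>i\<in>I. domain_on (X i) (le i) \<and> coherent_on (X i) (le i) \<and> zero_dim_on (X i) (le i)"
    and "finite F" and "F \<subseteq> prod_V1 I X le"
  shows "scott_closure (prod_V I X le) (prod_le I X le) (conv_hull F)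
           = down_set (prod_V I X le) (prod_le I X le) (conv_hull F)
      \<and> b_set I X le F = down_set (prod_V I X le) (prod_le I X le) (conv_hull F)
           \<inter> up_set (prod_V I X le) (prod_le I X le) (conv_hull F)"
proof -
  have "F \<subseteq> prod_V I X le" using assms(3) by (auto simp: prod_V1_def)
  have "scott_closure (prod_V I X le) (prod_le I X le) (conv_hull F)
      = down_set (prod_V I X le) (prod_le I X le) (conv_hull F)"
  proof (rule scott_closure_eq_down_set)
    show "prod_le I X le x z" if "prod_le I X le x y" "prod_le I X le y z" for x y z
      using that by (rule prod_le_trans)
    show "prod_le I X le x x" for x
      by (simp add: prod_le_def)
    show "conv_hull F \<subseteq> prod_V I X le"
      using \<open>F \<subseteq> prod_V I X le\<close> by (rule conv_hull_subset_prod_V)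
    show "s \<in> down_set (prod_V I X le) (prod_le I X le) (conv_hull F)"
      if "directed (prod_V I X le) (prod_le I X le) S" "is_lub (prod_V I X le) (prod_le I X le) S s"
        "S \<subseteq> down_set (prod_V I X le) (prod_le I X le) (conv_hull F)" for S s
      using down_set_conv_hull_directed_lub[OF assms(2,3) that] .
  qed
  then show ?thesis by (simp add: b_set_def)
qed

end
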